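(* Let $(G,o)$ be a directed median graph and let $v$ be a vertex of $G$. Then: (i) $\mathcal{F}_o(v,G)$ induces a convex subgraph of $G$; (ii) the restriction of the partial order $\prec_o$ to $\mathcal{F}_o(v,G)$ coincides with the restriction of the canonical basepoint order $\le_v$ to $\mathcal{F}_o(v,G)$; (iii) $\mathcal{F}_o(v,G)$ together with $\prec_o$ is (isomorphic to) the domain of an event structure; (iv) for any vertex $u\in \mathcal{F}_o(v,G)$, the principal filter $\mathcal{F}_o(u,G)$ is included in $\mathcal{F}_o(v,G)$ and coincides with the principal filter of $u$ with respect to the order $\le_v$ restricted to $\mathcal{F}_o(v,G)$.
   Context: A graph $G$ is median if for every three vertices $x,y,z$ the set $I(x,y)\cap I(y,z)\cap I(z,x)$ is a single vertex, where $I(u,w)=\{t: d(u,t)+d(t,w)=d(u,w)\}$ and $d$ is the graph distance. A subgraph is convex if it contains $I(x,y)$ for all its vertices $x,y$. For a vertex $v$, the canonical basepoint order is $x\le_v y$ iff $x\in I(v,y)$. A directed median graph $(G,o)$ is a median graph $G$ with an orientation $o$ of its edges such that opposite edges of every 4-cycle (square) of $G$ are oriented in the same direction (when the square is traversed so that they are parallel). The relation $\prec_o$ on vertices is defined by $x\prec_o y$ iff there is a directed path (possibly of length $0$) from $x$ to $y$; it is a partial order. The principal filter of $v$ is $\mathcal{F}_o(v,G)=\{x: v\prec_o x\}$. An event structure is a triple $(E,\le,\#)$ where $E$ is a set, $\le$ is a partial order on $E$ with $\{e'\,:\,e'\le e\}$ finite for all $e$, $\#$ is an irreflexive symmetric relation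 with $e\#e'$ and $e'\le e''$ implying $e\# e''$. A configuration is a finite subset of $E$ that is downward closed for $\le$ and contains no two events in conflict; the domain of the event structure is the set of configurations ordered by inclusion. *)

theory Defs
  imports Main
begin

definition simple_graph :: "'a set \<Rightarrow> ('a \<Rightarrow> 'a \<Rightarrow> bool) \<Rightarrow> bool" where
  "simple_graph V Adj \<longleftrightarrow>
     (\<forall>x y. Adj x y \<longrightarrow> x \<in> V \<and> y \<in> V) \<and>
     (\<forall>x y. Adj x y \<longrightarrow> Adj y x) \<and> (\<forall>x. \<not> Adj x x)"

definition connected_graph :: "'a set \<Rightarrow> ('a \<Rightarrow> 'a \<Rightarrow> bool) \<Rightarrow> bool" where
  "connected_graph V Adj \<longleftrightarrow> (\<forall>x\<in>V. \<forall>y\<in>V. \<exists>n. (Adj ^^ n) x y)"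

definition gdist :: "('a \<Rightarrow> 'a \<Rightarrow> bool) \<Rightarrow> 'a \<Rightarrow> 'a \<Rightarrow> nat" where
  "gdist Adj x y = (LEAST n. (Adj ^^ n) x y)"

definition interval :: "'a set \<Rightarrow> ('a \<Rightarrow> 'a \<Rightarrow> bool) \<Rightarrow> 'a \<Rightarrow> 'a \<Rightarrow> 'a set" where
  "interval V Adj u w = {t \<in> V. gdist Adj u t + gdist Adj t w = gdist Adj u w}"

definition median_graph :: "'a set \<Rightarrow> ('a \<Rightarrow> 'a \<Rightarrow> bool) \<Rightarrow> bool" where
  "median_graph V Adj \<longleftrightarrow> simple_graph V Adj \<and> connected_graph V Adj \<and>
     (\<forall>x\<in>V. \<forall>y\<in>V. \<forall>z\<in>V. \<exists>!m.
        m \<in> interval V Adj x y \<inter> interval V Adj y z \<inter> interval V Adj z x)"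

definition convex_set :: "'a set \<Rightarrow> ('a \<Rightarrow> 'a \<Rightarrow> bool) \<Rightarrow> 'a set \<Rightarrow> bool" where
  "convex_set V Adj S \<longleftrightarrow> S \<subseteq> V \<and> (\<forall>x\<in>S. \<forall>y\<in>S. interval V Adj x y \<subseteq> S)"

definition basepoint_le :: "'a set \<Rightarrow> ('a \<Rightarrow> 'a \<Rightarrow> bool) \<Rightarrow> 'a \<Rightarrow> 'a \<Rightarrow> 'a \<Rightarrow> bool" where
  "basepoint_le V Adj v x y \<longleftrightarrow> x \<in> interval V Adj v y"

definition directed_median_graph ::
  "'a set \<Rightarrow> ('a \<Rightarrow> 'a \<Rightarrow> bool) \<Rightarrow> ('a \<Rightarrow> 'a \<Rightarrow> bool) \<Rightarrow> bool" where
  "directed_median_graph V Adj D \<longleftrightarrow> median_graph V Adj \<and>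
     (\<forall>x y. D x y \<longrightarrow> Adj x y) \<and>
     (\<forall>x y. Adj x y \<longrightarrow> (D x y \<or> D y x)) \<and>
     (\<forall>x y. D x y \<longrightarrow> \<not> D y x) \<and>
     (\<forall>x1 x2 x3 x4. distinct [x1, x2, x3, x4] \<and> Adj x1 x2 \<and> Adj x2 x3 \<and> Adj x3 x4 \<and> Adj x4 x1
        \<longrightarrow> (D x1 x2 \<longleftrightarrow> D x4 x3))"

definition dir_le :: "('a \<Rightarrow> 'a \<Rightarrow> bool) \<Rightarrow> 'a \<Rightarrow> 'a \<Rightarrow> bool" where
  "dir_le D x y \<longleftrightarrow> D\<^sup>*\<^sup>* x y"

definition principal_filter :: "'a set \<Rightarrow> ('a \<Rightarrow> 'a \<Rightarrow> bool) \<Rightarrow> 'a \<Rightarrow> 'a set" where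
  "principal_filter V D v = {x \<in> V. dir_le D v x}"

definition event_structure :: "'e set \<Rightarrow> ('e \<Rightarrow> 'e \<Rightarrow> bool) \<Rightarrow> ('e \<Rightarrow> 'e \<Rightarrow> bool) \<Rightarrow> bool" where
  "event_structure E le cf \<longleftrightarrow>
     (\<forall>e\<in>E. le e e) \<and>
     (\<forall>e\<in>E. \<forall>e'\<in>E. le e e' \<and> le e' e \<longrightarrow> e = e') \<and>
     (\<forall>e\<in>E. \<forall>e'\<in>E. \<forall>e''\<in>E. le e e' \<and> le e' e'' \<longrightarrow> le e e'') \<and>
     (\<forall>e\<in>E. finite {e'\<in>E. le e' e}) \<and>
     (\<forall>e\<in>E. \<not> cf e e) \<and>
     (\<forall>e\<in>E. \<forall>e'\<in>E. cf e e' \<longrightarrow> cf e' e) \<and>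
     (\<forall>e\<in>E. \<forall>e'\<in>E. \<forall>e''\<in>E. cf e e' \<and> le e' e'' \<longrightarrow> cf e e'')"

definition configurations :: "'e set \<Rightarrow> ('e \<Rightarrow> 'e \<Rightarrow> bool) \<Rightarrow> ('e \<Rightarrow> 'e \<Rightarrow> bool) \<Rightarrow> 'e set set" where
  "configurations E le cf = {C. C \<subseteq> E \<and> finite C \<and>
      (\<forall>e\<in>C. \<forall>e'\<in>E. le e' e \<longrightarrow> e' \<in> C) \<and>
      (\<forall>e\<in>C. \<forall>e'\<in>C. \<not> cf e e')}"

end

theory Submission
  imports Defs
begin

text \<open>In a directed median graph all edges of a class of parallel edges (opposite sides of ladders
  of squares) carry the same orientation, so each halfspace is entered in one direction only.
  Consequently x is reachable from v by a directed path iff every edge separating v from x points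
  away from v. This makes the filter of v convex and turns directed paths inside it into
  geodesics issued from v. The events are the halfspaces entered by edges of the filter, ordered by
  reverse inclusion, with disjointness as conflict; a vertex corresponds to the set of such
  halfspaces containing it. A configuration is realised by adding its halfspaces one at a time,
  each step crossing a single edge into the point of the new halfspace nearest to the current
  vertex.\<close>

section \<open>Graph distance\<close>

locale connected_simple_graph =
  fixes V :: "'a set" and Adj :: "'a \<Rightarrow> 'a \<Rightarrow> bool"
  assumes simple: "simple_graph V Adj" and connected: "connected_graph V Adj"
begin

abbreviation d :: "'a \<Rightarrow> 'a \<Rightarrow> nat" where "d \<equiv> gdist Adj"

lemma adj_in_V: "Adj x y \<Longrightarrow> x \<in> V \<and> y \<in> V"
  and adj_sym: "Adj x y \<Longrightarrow> Adj y x"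
  and adj_irrefl: "\<not> Adj x x"
  using simple unfolding simple_graph_def by blast+

lemma walk_sym: "(Adj ^^ n) x y \<Longrightarrow> (Adj ^^ n) y x"
proof (induction n arbitrary: x y)
  case 0
  then show ?case by simp
next
  case (Suc n)
  from Suc.prems obtain z where "(Adj ^^ n) x z" "Adj z y" by (rule relpowp_Suc_E)
  with Suc.IH show ?case by (meson adj_sym relpowp_Suc_I2)
qed

lemma gdist_walk: "x \<in> V \<Longrightarrow> y \<in> V \<Longrightarrow> (Adj ^^ d x y) x y"
  using connected unfolding connected_graph_def gdist_def by (metis LeastI_ex)

lemma gdist_le_walk: "(Adj ^^ n) x y \<Longrightarrow> d x y \<le> n"
  unfolding gdist_def by (rule Least_le)

lemma gdist_self [simp]: "d x x = 0"
  using gdist_le_walk[of 0 x x] by simp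

lemma gdist_eq_0_iff: "x \<in> V \<Longrightarrow> y \<in> V \<Longrightarrow> d x y = 0 \<longleftrightarrow> x = y"
  using gdist_walk[of x y] by auto

lemma gdist_sym: "x \<in> V \<Longrightarrow> y \<in> V \<Longrightarrow> d x y = d y x"
  by (meson gdist_le_walk gdist_walk le_antisym walk_sym)

lemma gdist_triangle: "x \<in> V \<Longrightarrow> y \<in> V \<Longrightarrow> z \<in> V \<Longrightarrow> d x z \<le> d x y + d y z"
  using gdist_walk gdist_le_walk[of "d x y + d y z" x z] unfolding relpowp_add by blast

lemma gdist_eq_1_iff_adj: "x \<in> V \<Longrightarrow> y \<in> V \<Longrightarrow> d x y = 1 \<longleftrightarrow> Adj x y"
  using gdist_walk[of x y] gdist_le_walk[of 1 x y] gdist_eq_0_iff[of x y] adj_irrefl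
  by (cases "d x y") auto

lemma gdist_adj: "Adj x y \<Longrightarrow> d x y = 1"
  using adj_in_V gdist_eq_1_iff_adj by blast

lemma gdist_adj_le: "Adj x y \<Longrightarrow> z \<in> V \<Longrightarrow> d z y \<le> d z x + 1"
  using gdist_triangle adj_in_V gdist_adj by metis

lemma geodesic_last_step:
  assumes "x \<in> V" "y \<in> V" "x \<noteq> y"
  obtains z where "Adj z y" "d x z + 1 = d x y"
proof -
  obtain k where k: "d x y = Suc k"
    using assms gdist_eq_0_iff by (cases "d x y") auto
  with gdist_walk[OF assms(1,2)] obtain z where z: "(Adj ^^ k) x z" "Adj z y"
    by (metis relpowp_Suc_E)
  have "d x z \<le> k" using z(1) by (rule gdist_le_walk)
  moreover have "d x y \<le> d x z + 1" using gdist_adj_le z(2) assms(1) by blast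
  ultimately show thesis using that z(2) k by simp
qed

lemma geodesic_first_step:
  assumes "x \<in> V" "y \<in> V" "x \<noteq> y"
  obtains z where "Adj x z" "d z y + 1 = d x y"
  using geodesic_last_step[of y x] assms gdist_sym adj_sym adj_in_V by metis

abbreviation I :: "'a \<Rightarrow> 'a \<Rightarrow> 'a set" where "I \<equiv> interval V Adj"

lemma mem_interval_iff: "t \<in> I x y \<longleftrightarrow> t \<in> V \<and> d x t + d t y = d x y"
  unfolding interval_def by auto

lemma interval_sym: "x \<in> V \<Longrightarrow> y \<in> V \<Longrightarrow> I x y = I y x"
  unfolding interval_def using gdist_sym by (auto simp: add.commute)

lemma interval_gdist_2_adj:
  assumes "d a c = 2" "t \<in> I a c" "a \<in> V" "c \<in> V" "t \<noteq> a" "t \<noteq> c"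
  shows "Adj a t \<and> Adj t c"
proof -
  have "t \<in> V" "d a t + d t c = 2" using assms(1,2) mem_interval_iff by auto
  moreover have "d a t \<noteq> 0" "d t c \<noteq> 0" using assms gdist_eq_0_iff calculation(1) by auto
  ultimately have "d a t = 1" "d t c = 1" by arith+
  then show ?thesis using assms(3,4) \<open>t \<in> V\<close> gdist_eq_1_iff_adj by blast
qed

definition square :: "'a \<Rightarrow> 'a \<Rightarrow> 'a \<Rightarrow> 'a \<Rightarrow> bool" where
  "square a b c e \<longleftrightarrow> Adj a b \<and> Adj b c \<and> Adj c e \<and> Adj e a \<and> a \<noteq> c \<and> b \<noteq> e"

lemma square_distinct: "square a b c e \<Longrightarrow> distinct [a, b, c, e]"
  unfolding square_def using adj_irrefl by auto

end

section \<open>Median graphs and their halfspaces\<close>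

locale median =
  fixes V :: "'a set" and Adj :: "'a \<Rightarrow> 'a \<Rightarrow> bool"
  assumes median_graph: "median_graph V Adj"

sublocale median \<subseteq> connected_simple_graph
  using median_graph unfolding median_graph_def by unfold_locales auto

context median
begin

lemma median_unique: "x \<in> V \<Longrightarrow> y \<in> V \<Longrightarrow> z \<in> V \<Longrightarrow> \<exists>!m. m \<in> I x y \<and> m \<in> I y z \<and> m \<in> I z x"
  using median_graph unfolding median_graph_def by blast

lemma median_exists:
  assumes "x \<in> V" "y \<in> V" "z \<in> V"
  obtains m where "m \<in> I x y" "m \<in> I y z" "m \<in> I z x"
  using median_unique[OF assms] by blast

text \<open>Median graphs are bipartite: the median of z and the ends of an edge is one of the ends.\<close>

lemma gdist_adj_neq:
  assumes "Adj x y" "z \<in> V"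
  shows "d z x \<noteq> d z y"
proof
  assume eq: "d z x = d z y"
  have xy: "x \<in> V" "y \<in> V" "d x y = 1" "d y x = 1" using assms(1) adj_in_V gdist_adj adj_sym by auto
  obtain m where m: "m \<in> I z x" "m \<in> I x y" "m \<in> I y z" using median_exists[OF assms(2) xy(1,2)] .
  then have "m \<in> V" "d x m + d m y = 1" using xy mem_interval_iff by auto
  then have "d x m = 0 \<or> d m y = 0" by arith
  then have "m = x \<or> m = y" using gdist_eq_0_iff xy \<open>m \<in> V\<close> by blast
  then show False
    using m(1,3) eq xy assms(2) gdist_sym unfolding mem_interval_iff by auto
qed

lemma gdist_adj_cases: "Adj a b \<Longrightarrow> z \<in> V \<Longrightarrow> d z b = d z a + 1 \<or> d z a = d z b + 1"
  using gdist_adj_neq[of a b z] gdist_adj_le[of a b z] gdist_adj_le[of b a z] adj_sym by fastforce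

lemma gdist_two_step: "Adj x t \<Longrightarrow> Adj t y \<Longrightarrow> x \<noteq> y \<Longrightarrow> d x y = 2"
  using gdist_triangle[of x t y] gdist_adj gdist_adj_cases[of t y x] adj_in_V gdist_eq_0_iff[of x y]
  by fastforce

definition halfspace :: "'a \<Rightarrow> 'a \<Rightarrow> 'a set" where
  "halfspace a b = {z \<in> V. d z a < d z b}"

lemma mem_halfspace_iff: "z \<in> halfspace a b \<longleftrightarrow> z \<in> V \<and> d z a < d z b"
  unfolding halfspace_def by simp

lemma halfspace_disjoint: "halfspace a b \<inter> halfspace b a = {}"
  unfolding halfspace_def by auto

lemma halfspace_cases: "Adj a b \<Longrightarrow> z \<in> V \<Longrightarrow> z \<in> halfspace a b \<or> z \<in> halfspace b a"
  unfolding mem_halfspace_iff using gdist_adj_neq by (metis nat_neq_iff)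

lemma halfspace_self: "Adj a b \<Longrightarrow> a \<in> halfspace a b"
  unfolding mem_halfspace_iff using adj_in_V gdist_adj by simp

text \<open>The edges ab and a'b' are opposite sides of a ladder of k squares: the Djokovic-Winkler
  relation of median graphs, with the length of the ladder recorded.\<close>

definition parallel_at :: "nat \<Rightarrow> 'a \<Rightarrow> 'a \<Rightarrow> 'a \<Rightarrow> 'a \<Rightarrow> bool" where
  "parallel_at k a b a' b' \<longleftrightarrow> Adj a b \<and> Adj a' b' \<and>
     d a a' = k \<and> d b b' = k \<and> d a b' = k + 1 \<and> d b a' = k + 1"

lemma parallel_at_0: "parallel_at 0 a b a' b' \<Longrightarrow> a' = a \<and> b' = b"
  unfolding parallel_at_def using gdist_eq_0_iff adj_in_V by auto

text \<open>The fourth corner of the first square is the median of b, a1 and b', where a1 is the first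
  step from a towards a'.\<close>

lemma parallel_at_Suc_square:
  assumes "parallel_at (Suc k) a b a' b'"
  obtains a1 b1 where "square a b b1 a1" "parallel_at k a1 b1 a' b'"
proof -
  have ab: "Adj a b" "Adj a' b'" and V: "a \<in> V" "b \<in> V" "a' \<in> V" "b' \<in> V"
    and ds: "d a a' = Suc k" "d b b' = Suc k" "d a b' = k + 2" "d b a' = k + 2"
    using assms adj_in_V unfolding parallel_at_def by auto
  have "a \<noteq> a'" using ds(1) by auto
  then obtain a1 where a1: "Adj a a1" "d a1 a' + 1 = d a a'"
    using geodesic_first_step[OF V(1,3)] by blast
  have a1V: "a1 \<in> V" and da1a': "d a1 a' = k" using a1 adj_in_V ds(1) by auto
  have "a1 \<noteq> b" using da1a' ds(4) by auto
  then have da1b: "d a1 b = 2" "d b a1 = 2" using gdist_two_step adj_sym a1(1) ab(1) by blast+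
  have "d a1 b' \<le> d a1 a' + d a' b'" "d a b' \<le> d a a1 + d a1 b'" "d a a1 = 1" "d a' b' = 1"
    using gdist_triangle[OF a1V V(3,4)] gdist_triangle[OF V(1) a1V V(4)] gdist_adj a1(1) ab(2) by auto
  then have da1b': "d a1 b' = Suc k" using da1a' ds(3) by linarith
  obtain m where m: "m \<in> I b a1" "m \<in> I a1 b'" "m \<in> I b' b"
    using median_exists[OF V(2) a1V V(4)] .
  have mV: "m \<in> V" using m mem_interval_iff by blast
  have "d b' b = Suc k" "d b' a1 = Suc k" using ds(2) da1b' gdist_sym V a1V by auto
  then have "m \<noteq> b" "m \<noteq> a1" using m(2,3) da1b da1b' ds(2) unfolding mem_interval_iff by auto
  then have bm: "Adj b m" "Adj m a1" using interval_gdist_2_adj[OF da1b(2) m(1) V(2) a1V] by auto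
  have "d b' m + 1 = Suc k" using m(3) \<open>d b' b = Suc k\<close> gdist_adj[OF adj_sym[OF bm(1)]]
    unfolding mem_interval_iff by simp
  then have dmb': "d m b' = k" using gdist_sym[OF mV V(4)] by simp
  have "d m a' \<le> d m b' + d b' a'" "d b a' \<le> d b m + d m a'" "d b m = 1" "d b' a' = 1"
    using gdist_triangle[OF mV V(4,3)] gdist_triangle[OF V(2) mV V(3)] gdist_adj bm(1) adj_sym[OF ab(2)]
    by auto
  then have dma': "d m a' = k + 1" using dmb' ds(4) by linarith
  have "square a b m a1"
    unfolding square_def using ab(1) bm a1(1) adj_sym \<open>a1 \<noteq> b\<close> dmb' ds(3) by auto
  moreover have "parallel_at k a1 m a' b'"
    unfolding parallel_at_def using adj_sym[OF bm(2)] ab(2) da1a' dmb' dma' da1b' by simp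
  ultimately show thesis by (rule that)
qed

text \<open>If the halfspaces of opposite edges of a square differed, a and b1 would both be medians of
  b, a1 and a common neighbour m of a and b1.\<close>

lemma square_halfspace_subset:
  assumes sq: "square a b b1 a1" and z: "z \<in> halfspace a b"
  shows "z \<in> halfspace a1 b1"
proof (rule ccontr)
  have e: "Adj a b" "Adj b b1" "Adj b1 a1" "Adj a1 a" "a \<noteq> b1" "b \<noteq> a1"
    using sq unfolding square_def by auto
  have V: "z \<in> V" "a \<in> V" "b \<in> V" "a1 \<in> V" "b1 \<in> V" using e z adj_in_V mem_halfspace_iff by auto
  assume "z \<notin> halfspace a1 b1"
  then have "d z b1 < d z a1" using halfspace_cases[OF e(3) V(1)] mem_halfspace_iff by auto
  moreover have "d z a < d z b" using z mem_halfspace_iff by simp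
  moreover note gdist_adj_cases[OF e(1) V(1)] gdist_adj_cases[OF e(2) V(1)]
    gdist_adj_cases[OF e(3) V(1)] gdist_adj_cases[OF e(4) V(1)]
  ultimately have r: "d z b1 = d z a" "d z a1 = d z a + 1" by arith+
  have dab1: "d a b1 = 2" "d b1 a = 2" using gdist_two_step adj_sym e(1,2,5) by blast+
  obtain m where m: "m \<in> I z a" "m \<in> I a b1" "m \<in> I b1 z" using median_exists[OF V(1,2,5)] .
  have mV: "m \<in> V" using m mem_interval_iff by blast
  have "d b1 z = d z a" "d a z = d z a" using r gdist_sym V by auto
  then have "m \<noteq> a" "m \<noteq> b1" using m(1,3) r dab1 unfolding mem_interval_iff by auto
  then have am: "Adj a m" "Adj m b1" using interval_gdist_2_adj[OF dab1(1) m(2) V(2,5)] by auto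
  have "d z m + 1 = d z a" using m(1) gdist_adj[OF adj_sym[OF am(1)]] mem_interval_iff by simp
  then have "m \<noteq> b" "m \<noteq> a1" using r z mem_halfspace_iff by auto
  have d2: "d b a1 = 2" "d a1 m = 2" "d m b = 2"
    using gdist_two_step[OF adj_sym[OF e(1)] adj_sym[OF e(4)] e(6)]
      gdist_two_step[OF e(4) am(1) \<open>m \<noteq> a1\<close>[symmetric]]
      gdist_two_step[OF adj_sym[OF am(1)] e(1) \<open>m \<noteq> b\<close>] by auto
  have "d a b = 1" "d b a = 1" "d a a1 = 1" "d a1 a = 1" "d a m = 1" "d m a = 1"
    "d b b1 = 1" "d b1 b = 1" "d b1 a1 = 1" "d a1 b1 = 1" "d b1 m = 1" "d m b1 = 1"
    using gdist_adj e am adj_sym by blast+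
  then have "a \<in> I b a1 \<and> a \<in> I a1 m \<and> a \<in> I m b" "b1 \<in> I b a1 \<and> b1 \<in> I a1 m \<and> b1 \<in> I m b"
    unfolding mem_interval_iff using d2 V by simp_all
  then show False using median_unique[OF V(3,4) mV] e(5) by blast
qed

lemma square_halfspace: "square a b b1 a1 \<Longrightarrow> halfspace a b = halfspace a1 b1"
  using square_halfspace_subset[of a b b1 a1] square_halfspace_subset[of a1 b1 b a]
  unfolding square_def using adj_sym by blast

lemma parallel_at_halfspace: "parallel_at k a b a' b' \<Longrightarrow> halfspace a b = halfspace a' b'"
proof (induction k arbitrary: a b)
  case 0
  then show ?case using parallel_at_0 by blast
next
  case (Suc k)
  obtain a1 b1 where "square a b b1 a1" "parallel_at k a1 b1 a' b'"
    using parallel_at_Suc_square[OF Suc.prems] .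
  then show ?case using square_halfspace Suc.IH by blast
qed

lemma parallel_at_if_separated:
  assumes e: "Adj a b" "Adj p q" and sep: "p \<in> halfspace a b" "q \<in> halfspace b a"
  shows "parallel_at (d a p) a b p q"
proof -
  have V: "a \<in> V" "b \<in> V" "p \<in> V" "q \<in> V" using e adj_in_V by auto
  have "d p b = d p a + 1" "d q a = d q b + 1"
    using sep gdist_adj_cases[OF e(1) V(3)] gdist_adj_cases[OF e(1) V(4)] mem_halfspace_iff by auto
  moreover have "d a q \<noteq> d a p" "d b q \<noteq> d b p"
    using gdist_adj_neq[OF e(2)] V by metis+
  moreover have "d a q \<le> d a p + 1" "d a p \<le> d a q + 1" "d b q \<le> d b p + 1" "d b p \<le> d b q + 1"
    using gdist_adj_le e(2) adj_sym V by blast+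
  moreover have "d a p = d p a" "d a q = d q a" "d b p = d p b" "d b q = d q b"
    using gdist_sym V by auto
  ultimately have "d a q = d a p + 1" "d b q = d a p" "d b p = d a p + 1" by arith+
  then show ?thesis
    unfolding parallel_at_def using e by auto
qed

lemma halfspace_eq_if_separated:
  "Adj a b \<Longrightarrow> Adj p q \<Longrightarrow> p \<in> halfspace a b \<Longrightarrow> q \<in> halfspace b a \<Longrightarrow> halfspace a b = halfspace p q"
  using parallel_at_if_separated parallel_at_halfspace by blast

lemma separating_edge_on_geodesic:
  assumes "Adj a b" "x \<in> halfspace a b" "t \<in> halfspace b a"
  shows "\<exists>p q. Adj p q \<and> p \<in> halfspace a b \<and> q \<in> halfspace b a \<and> d x p + 1 + d q t = d x t"
  using assms(2,3)
proof (induction "d x t" arbitrary: x)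
  case 0
  then have "x = t" using gdist_eq_0_iff mem_halfspace_iff by metis
  then show ?case using 0 halfspace_disjoint by blast
next
  case (Suc n)
  have V: "x \<in> V" "t \<in> V" using Suc.prems mem_halfspace_iff by auto
  have "x \<noteq> t" using Suc.prems halfspace_disjoint by blast
  then obtain x1 where x1: "Adj x x1" "d x1 t + 1 = d x t" using geodesic_first_step V by blast
  have x1V: "x1 \<in> V" using x1 adj_in_V by blast
  show ?case
  proof (cases "x1 \<in> halfspace b a")
    case True
    then show ?thesis using Suc.prems(1) x1 by (intro exI[of _ x] exI[of _ x1]) simp
  next
    case False
    then have "x1 \<in> halfspace a b" using halfspace_cases[OF assms(1) x1V] by blast
    moreover have "n = d x1 t" using x1(2) Suc.hyps(2) by simp
    ultimately obtain p q where pq: "Adj p q" "p \<in> halfspace a b" "q \<in> halfspace b a"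
        "d x1 p + 1 + d q t = d x1 t"
      using Suc.hyps(1) Suc.prems(2) by blast
    have "p \<in> V" "q \<in> V" using pq adj_in_V by auto
    then have "d x p \<le> d x x1 + d x1 p" "d x t \<le> d x p + d p t" "d p t \<le> d p q + d q t"
      using gdist_triangle V x1V by blast+
    then show ?thesis using pq x1 gdist_adj[OF x1(1)] gdist_adj[OF pq(1)] by fastforce
  qed
qed

text \<open>A geodesic leaving a halfspace crosses an edge parallel to the one defining it; two such
  crossings, from x and from y, would make a walk from x to y shorter than d x y.\<close>

lemma halfspace_convex:
  assumes e: "Adj a b" and xy: "x \<in> halfspace a b" "y \<in> halfspace a b"
  shows "I x y \<subseteq> halfspace a b"
proof
  fix t assume t: "t \<in> I x y"
  show "t \<in> halfspace a b"
  proof (rule ccontr)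
    assume "t \<notin> halfspace a b"
    then have tb: "t \<in> halfspace b a" using halfspace_cases[OF e] t mem_interval_iff by blast
    obtain p q where pq: "Adj p q" "p \<in> halfspace a b" "q \<in> halfspace b a" "d x p + 1 + d q t = d x t"
      using separating_edge_on_geodesic[OF e xy(1) tb] by blast
    obtain p' q' where pq': "Adj p' q'" "p' \<in> halfspace a b" "q' \<in> halfspace b a"
        "d y p' + 1 + d q' t = d y t"
      using separating_edge_on_geodesic[OF e xy(2) tb] by blast
    have "halfspace a b = halfspace p q" "halfspace b a = halfspace q p"
      using halfspace_eq_if_separated e pq(1-3) adj_sym by blast+
    then have "d p p' = d q q'"
      using parallel_at_if_separated[OF pq(1) pq'(1)] pq' unfolding parallel_at_def by simp
    moreover have V: "x \<in> V" "y \<in> V" "t \<in> V" "p \<in> V" "q \<in> V" "p' \<in> V" "q' \<in> V"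
      using xy t pq pq' adj_in_V mem_halfspace_iff mem_interval_iff by auto
    then have "d x y \<le> d x p + d p y" "d p y \<le> d p p' + d p' y" "d q q' \<le> d q t + d t q'"
      using gdist_triangle by blast+
    moreover have "d x y = d x t + d t y" using t mem_interval_iff by simp
    moreover have "d p' y = d y p'" "d t q' = d q' t" "d t y = d y t" using gdist_sym V by auto
    ultimately show False using pq(4) pq'(4) by linarith
  qed
qed

lemma finite_separating_halfspaces:
  assumes "u \<in> V" "y \<in> V"
  shows "finite {halfspace q p |p q. Adj p q \<and> u \<notin> halfspace q p \<and> y \<in> halfspace q p}"
  using assms(2)
proof (induction "d u y" arbitrary: y rule: less_induct)
  case less
  show ?case
  proof (cases "y = u")
    case True
    then show ?thesis by simp
  next
    case False
    then obtain y' where y': "Adj y' y" "d u y' + 1 = d u y"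
      using geodesic_last_step assms(1) less.prems by metis
    have y'V: "y' \<in> V" using y' adj_in_V by blast
    have "{halfspace q p |p q. Adj p q \<and> u \<notin> halfspace q p \<and> y \<in> halfspace q p} \<subseteq>
        insert (halfspace y y') {halfspace q p |p q. Adj p q \<and> u \<notin> halfspace q p \<and> y' \<in> halfspace q p}"
    proof
      fix H assume "H \<in> {halfspace q p |p q. Adj p q \<and> u \<notin> halfspace q p \<and> y \<in> halfspace q p}"
      then obtain p q where pq: "Adj p q" "H = halfspace q p" "u \<notin> H" "y \<in> H" by blast
      show "H \<in> insert (halfspace y y') {halfspace q p |p q. Adj p q \<and> u \<notin> halfspace q p \<and> y' \<in> halfspace q p}"
      proof (cases "y' \<in> H")
        case True
        then show ?thesis using pq by blast
      next
        case False
        then have "y' \<in> halfspace p q" using halfspace_cases pq y'V by blast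
        then have "H = halfspace y y'"
          using halfspace_eq_if_separated[of q p y y'] adj_sym pq y'(1) by blast
        then show ?thesis by blast
      qed
    qed
    moreover have "d u y' < d u y" using y' by simp
    ultimately show ?thesis using less.hyps y'V finite_subset by (metis (no_types, lifting) finite_insert)
  qed
qed

lemma nearest_point_in_interval:
  assumes convex: "\<And>x z. x \<in> H \<Longrightarrow> z \<in> H \<Longrightarrow> I x z \<subseteq> H"
    and "H \<subseteq> V" "y \<in> V" "x \<in> H" "z \<in> H" and nearest: "\<And>z. z \<in> H \<Longrightarrow> d y x \<le> d y z"
  shows "x \<in> I y z"
proof -
  have V: "x \<in> V" "z \<in> V" using assms by auto
  obtain m where m: "m \<in> I y x" "m \<in> I x z" "m \<in> I z y" using median_exists[OF assms(3) V] .
  have "m \<in> H" using convex m(2) assms(4,5) by blast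
  then have "d y x \<le> d y m" by (rule nearest)
  with m(1) have "d m x = 0" unfolding mem_interval_iff by simp
  then have "m = x" using V gdist_eq_0_iff m(1) mem_interval_iff by blast
  then show ?thesis using m(3) interval_sym V assms(3) by auto
qed

lemma interval_subset_halfspace:
  assumes "Adj y y1" "d y1 x + 1 = d y x" "H \<subseteq> V" "\<And>z. z \<in> H \<Longrightarrow> x \<in> I y z"
  shows "H \<subseteq> halfspace y1 y"
proof
  fix z assume "z \<in> H"
  then have z: "z \<in> V" "x \<in> I y z" using assms(3,4) by auto
  then have x: "x \<in> V" "d y x + d x z = d y z" using mem_interval_iff by auto
  have y: "y \<in> V" "y1 \<in> V" using assms(1) adj_in_V by auto
  have "d y1 z \<le> d y1 x + d x z" using gdist_triangle y(2) x(1) z(1) by blast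
  then have "d z y1 < d z y" using assms(2) x(2) gdist_sym y z(1) by simp
  then show "z \<in> halfspace y1 y" using z(1) mem_halfspace_iff by blast
qed

end

section \<open>Directed median graphs\<close>

locale directed_median =
  fixes V :: "'a set" and Adj D :: "'a \<Rightarrow> 'a \<Rightarrow> bool"
  assumes directed: "directed_median_graph V Adj D"

sublocale directed_median \<subseteq> median
  using directed unfolding directed_median_graph_def by unfold_locales (rule conjunct1)

context directed_median
begin

lemma D_adj: "D x y \<Longrightarrow> Adj x y"
  and D_asym: "D x y \<Longrightarrow> \<not> D y x"
  using directed unfolding directed_median_graph_def by blast+

lemma square_D: "square a b c e \<Longrightarrow> D a b \<longleftrightarrow> D e c"
  using directed square_distinct unfolding directed_median_graph_def square_def by blast

lemma parallel_at_D: "parallel_at k a b a' b' \<Longrightarrow> D a b \<longleftrightarrow> D a' b'"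
proof (induction k arbitrary: a b)
  case 0
  then show ?case using parallel_at_0 by blast
next
  case (Suc k)
  obtain a1 b1 where "square a b b1 a1" "parallel_at k a1 b1 a' b'"
    using parallel_at_Suc_square[OF Suc.prems] .
  then show ?case using square_D Suc.IH by blast
qed

lemma D_iff_if_separated:
  "Adj a b \<Longrightarrow> Adj p q \<Longrightarrow> p \<in> halfspace a b \<Longrightarrow> q \<in> halfspace b a \<Longrightarrow> D a b \<longleftrightarrow> D p q"
  using parallel_at_if_separated parallel_at_D by blast

end

section \<open>Event structures of sets\<close>

lemma event_structure_supersets:
  assumes "{} \<notin> E" and "\<And>e. e \<in> E \<Longrightarrow> finite {e' \<in> E. e \<subseteq> e'}"
  shows "event_structure E (\<supseteq>) disjnt"
  unfolding event_structure_def disjnt_def using assms by (auto simp: Int_absorb)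

lemma configurations_remove_minimal:
  assumes "C \<in> configurations E (\<supseteq>) cf" and "e \<in> C"
    and minimal: "\<And>e'. e' \<in> C \<Longrightarrow> e' \<subseteq> e \<Longrightarrow> e' = e"
  shows "C - {e} \<in> configurations E (\<supseteq>) cf"
proof -
  have C: "C \<subseteq> E" "finite C" "\<And>e1 e'. e1 \<in> C \<Longrightarrow> e' \<in> E \<Longrightarrow> e1 \<subseteq> e' \<Longrightarrow> e' \<in> C"
    "\<And>e1 e'. e1 \<in> C \<Longrightarrow> e' \<in> C \<Longrightarrow> \<not> cf e1 e'"
    using assms(1) unfolding configurations_def by auto
  show ?thesis
    unfolding configurations_def mem_Collect_eq
  proof (intro conjI ballI impI)
    show "C - {e} \<subseteq> E" "finite (C - {e})" using C(1,2) by auto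
  next
    fix e1 e' assume e1: "e1 \<in> C - {e}" and e': "e' \<in> E" "e1 \<subseteq> e'"
    have "e' \<noteq> e" using e1 e'(2) minimal[of e1] by auto
    then show "e' \<in> C - {e}" using C(3) e1 e' by blast
  next
    fix e1 e' assume "e1 \<in> C - {e}" "e' \<in> C - {e}"
    then show "\<not> cf e1 e'" using C(4) by blast
  qed
qed

lemma inj_Id_on: "inj Id_on"
  by (metis Domain_Id_on injI)

lemma Id_on_subset_iff: "Id_on A \<subseteq> Id_on B \<longleftrightarrow> A \<subseteq> B"
  by auto

lemma disjnt_Id_on_iff: "disjnt (Id_on A) (Id_on B) \<longleftrightarrow> disjnt A B"
  unfolding disjnt_def by auto

text \<open>The theorem asks for events that are sets of pairs; a halfspace H is represented by the
  diagonal relation Id_on H, which preserves inclusion and disjointness.\<close>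

lemma configurations_image_Id_on:
  "configurations (Id_on ` E) (\<supseteq>) disjnt = image Id_on ` configurations E (\<supseteq>) disjnt"
proof (intro equalityI subsetI)
  fix C assume "C \<in> configurations (Id_on ` E) (\<supseteq>) disjnt"
  then have C: "C \<subseteq> Id_on ` E" "finite C"
    "\<And>e e'. e \<in> C \<Longrightarrow> e' \<in> Id_on ` E \<Longrightarrow> e \<subseteq> e' \<Longrightarrow> e' \<in> C"
    "\<And>e e'. e \<in> C \<Longrightarrow> e' \<in> C \<Longrightarrow> \<not> disjnt e e'"
    unfolding configurations_def by auto
  define C' where "C' = {A \<in> E. Id_on A \<in> C}"
  have C_eq: "C = Id_on ` C'" using C(1) unfolding C'_def by blast
  have "C' \<in> configurations E (\<supseteq>) disjnt"
    unfolding configurations_def mem_Collect_eq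
  proof (intro conjI ballI impI)
    show "C' \<subseteq> E" unfolding C'_def by blast
    show "finite C'" using C(2) C_eq finite_imageD inj_Id_on by (metis inj_on_subset subset_UNIV)
  next
    fix A B assume "A \<in> C'" "B \<in> E" "A \<subseteq> B"
    then show "B \<in> C'" using C(3)[of "Id_on A" "Id_on B"] unfolding C'_def Id_on_subset_iff by blast
  next
    fix A B assume "A \<in> C'" "B \<in> C'"
    then show "\<not> disjnt A B" using C(4) disjnt_Id_on_iff unfolding C'_def by blast
  qed
  then show "C \<in> image Id_on ` configurations E (\<supseteq>) disjnt" using C_eq by blast
next
  fix C assume "C \<in> image Id_on ` configurations E (\<supseteq>) disjnt"
  then obtain C' where C: "C = Id_on ` C'" "C' \<subseteq> E" "finite C'"
    "\<And>A B. A \<in> C' \<Longrightarrow> B \<in> E \<Longrightarrow> A \<subseteq> B \<Longrightarrow> B \<in> C'"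
    "\<And>A B. A \<in> C' \<Longrightarrow> B \<in> C' \<Longrightarrow> \<not> disjnt A B"
    unfolding configurations_def by auto
  show "C \<in> configurations (Id_on ` E) (\<supseteq>) disjnt"
    unfolding configurations_def mem_Collect_eq
  proof (intro conjI ballI impI)
    show "C \<subseteq> Id_on ` E" "finite C" using C(1-3) by auto
  next
    fix e e' assume "e \<in> C" "e' \<in> Id_on ` E" "e \<subseteq> e'"
    then obtain A B where "A \<in> C'" "B \<in> E" "e = Id_on A" "e' = Id_on B" "A \<subseteq> B"
      using C(1) Id_on_subset_iff by auto
    then show "e' \<in> C" using C(1,4) by blast
  next
    fix e e' assume "e \<in> C" "e' \<in> C"
    then show "\<not> disjnt e e'" using C(1,5) disjnt_Id_on_iff by auto
  qed
qed

section \<open>The principal filter of a vertex\<close>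

locale rooted_directed_median = directed_median +
  fixes v :: 'a
  assumes root: "v \<in> V"
begin

abbreviation F :: "'a set" where "F \<equiv> principal_filter V D v"

lemma mem_filter_iff: "x \<in> F \<longleftrightarrow> x \<in> V \<and> D\<^sup>*\<^sup>* v x"
  unfolding principal_filter_def dir_le_def by simp

lemma root_in_filter: "v \<in> F"
  using root mem_filter_iff by simp

definition oriented_away :: "'a \<Rightarrow> bool" where
  "oriented_away x \<longleftrightarrow> (\<forall>a b. Adj a b \<longrightarrow> v \<in> halfspace a b \<longrightarrow> x \<in> halfspace b a \<longrightarrow> D a b)"

lemma oriented_away_D:
  "oriented_away x \<Longrightarrow> Adj a b \<Longrightarrow> v \<in> halfspace a b \<Longrightarrow> x \<in> halfspace b a \<Longrightarrow> D a b"
  unfolding oriented_away_def by blast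

lemma oriented_away_step:
  assumes "oriented_away y" "D y z"
  shows "oriented_away z"
  unfolding oriented_away_def
proof (intro allI impI)
  fix a b assume ab: "Adj a b" "v \<in> halfspace a b" "z \<in> halfspace b a"
  have yz: "Adj y z" "y \<in> V" using assms(2) D_adj adj_in_V by blast+
  show "D a b"
  proof (cases "y \<in> halfspace b a")
    case True
    then show ?thesis using assms(1) ab oriented_away_D by blast
  next
    case False
    then have "y \<in> halfspace a b" using halfspace_cases ab(1) yz(2) by blast
    then show ?thesis using D_iff_if_separated[OF ab(1) yz(1)] ab(3) assms(2) by blast
  qed
qed

lemma oriented_away_predecessor:
  assumes "oriented_away x" "Adj x' x" "d v x' < d v x"
  shows "D x' x" "oriented_away x'"
proof -
  have V: "x \<in> V" "x' \<in> V" using assms(2) adj_in_V by auto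
  have sep: "v \<in> halfspace x' x" "x \<in> halfspace x x'"
    using assms(2,3) root halfspace_self adj_sym mem_halfspace_iff by auto
  then show "D x' x" using assms(1,2) oriented_away_D by blast
  show "oriented_away x'"
    unfolding oriented_away_def
  proof (intro allI impI)
    fix a b assume ab: "Adj a b" "v \<in> halfspace a b" "x' \<in> halfspace b a"
    show "D a b"
    proof (cases "x \<in> halfspace b a")
      case True
      then show ?thesis using assms(1) ab oriented_away_D by blast
    next
      case False
      then have "x \<in> halfspace a b" using halfspace_cases ab(1) V(1) by blast
      then have "halfspace a b = halfspace x x'"
        using halfspace_eq_if_separated ab adj_sym[OF assms(2)] by blast
      then show ?thesis using ab(2) sep(1) halfspace_disjoint by blast
    qed
  qed
qed

lemma filter_oriented_away: "x \<in> F \<Longrightarrow> oriented_away x"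
proof -
  assume "x \<in> F"
  then have "D\<^sup>*\<^sup>* v x" using mem_filter_iff by blast
  then show "oriented_away x"
  proof (induction rule: rtranclp_induct)
    case base
    then show ?case unfolding oriented_away_def mem_halfspace_iff by auto
  next
    case (step y z)
    then show ?case using oriented_away_step by blast
  qed
qed

lemma oriented_away_filter: "x \<in> V \<Longrightarrow> oriented_away x \<Longrightarrow> x \<in> F"
proof (induction "d v x" arbitrary: x rule: less_induct)
  case less
  show ?case
  proof (cases "x = v")
    case True
    then show ?thesis using root_in_filter by simp
  next
    case False
    then obtain x' where x': "Adj x' x" "d v x' + 1 = d v x"
      using geodesic_last_step[OF root less.prems(1)] by auto
    then have "D x' x" "oriented_away x'" using oriented_away_predecessor less.prems(2) by auto
    moreover have "x' \<in> F" using less.hyps[of x'] x' adj_in_V calculation(2) by simp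
    ultimately show ?thesis using mem_filter_iff less.prems(1) rtranclp.rtrancl_into_rtrancl by metis
  qed
qed

lemma mem_filter_iff_oriented_away: "x \<in> F \<longleftrightarrow> x \<in> V \<and> oriented_away x"
  using filter_oriented_away oriented_away_filter mem_filter_iff by blast

lemma filter_edge_D: "x \<in> F \<Longrightarrow> Adj y x \<Longrightarrow> d v y < d v x \<Longrightarrow> D y x"
  using filter_oriented_away oriented_away_predecessor by blast

lemma filter_convex: "x \<in> F \<Longrightarrow> y \<in> F \<Longrightarrow> I x y \<subseteq> F"
proof
  fix t assume xy: "x \<in> F" "y \<in> F" and t: "t \<in> I x y"
  have "oriented_away t"
    unfolding oriented_away_def
  proof (intro allI impI)
    fix a b assume ab: "Adj a b" "v \<in> halfspace a b" "t \<in> halfspace b a"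
    show "D a b"
    proof (cases "x \<in> halfspace b a \<or> y \<in> halfspace b a")
      case True
      then show ?thesis using xy filter_oriented_away oriented_away_D ab by blast
    next
      case False
      then have "x \<in> halfspace a b" "y \<in> halfspace a b"
        using halfspace_cases ab(1) xy mem_filter_iff by blast+
      then show ?thesis using halfspace_convex ab t halfspace_disjoint by blast
    qed
  qed
  then show "t \<in> F" using mem_filter_iff_oriented_away t mem_interval_iff by blast
qed

lemma filter_D_gdist: "x \<in> F \<Longrightarrow> D x z \<Longrightarrow> d v z = d v x + 1"
  using gdist_adj_cases[OF D_adj root] filter_edge_D[of x z] D_asym D_adj adj_sym by fastforce

lemma rtranclp_D_filter_gdist: "D\<^sup>*\<^sup>* x y \<Longrightarrow> x \<in> F \<Longrightarrow> y \<in> F \<and> d v x + d x y \<le> d v y"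
proof (induction rule: rtranclp_induct)
  case base
  then show ?case by simp
next
  case (step y z)
  then have IH: "y \<in> F" "d v x + d x y \<le> d v y" by auto
  have yz: "Adj y z" "z \<in> V" using step.hyps(2) D_adj adj_in_V by blast+
  have "d x z \<le> d x y + 1" using gdist_adj_le[OF yz(1)] step.prems mem_filter_iff by blast
  moreover have "z \<in> F"
    using IH(1) yz(2) step.hyps(2) mem_filter_iff rtranclp.rtrancl_into_rtrancl by metis
  moreover have "d v z = d v y + 1" using filter_D_gdist IH(1) step.hyps(2) by blast
  ultimately show ?case using IH(2) by simp
qed

lemma rtranclp_D_interval: "x \<in> F \<Longrightarrow> D\<^sup>*\<^sup>* x y \<Longrightarrow> x \<in> I v y"
  using rtranclp_D_filter_gdist gdist_triangle[OF root] mem_filter_iff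
  unfolding mem_interval_iff by (meson le_antisym)

lemma interval_rtranclp_D:
  assumes "x \<in> F" "y \<in> F" "x \<in> I v y"
  shows "D\<^sup>*\<^sup>* x y"
  using assms(2,3)
proof (induction "d x y" arbitrary: y)
  case 0
  then have "x = y" using gdist_eq_0_iff assms(1) mem_filter_iff by metis
  then show ?case by simp
next
  case (Suc n)
  have V: "x \<in> V" "y \<in> V" using assms(1) Suc.prems mem_filter_iff by auto
  have "x \<noteq> y" using Suc.hyps(2) by auto
  then obtain y' where y': "Adj y' y" "d x y' + 1 = d x y" using geodesic_last_step V by blast
  have y'V: "y' \<in> V" using y' adj_in_V by blast
  have "d v y' \<le> d v x + d x y'" "d v y \<le> d v y' + 1" "d v x + d x y = d v y"
    using gdist_triangle[OF root V(1) y'V] gdist_adj_le[OF y'(1) root] Suc.prems(2) mem_interval_iff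
    by auto
  then have dy': "d v y' + 1 = d v y" "d v x + d x y' = d v y'" using y'(2) by linarith+
  then have "y' \<in> I v y" using mem_interval_iff y'V gdist_adj[OF y'(1)] by simp
  then have "y' \<in> F" using filter_convex root_in_filter Suc.prems(1) by blast
  moreover have "x \<in> I v y'" using dy'(2) mem_interval_iff V(1) by simp
  ultimately have "D\<^sup>*\<^sup>* x y'" using Suc.hyps(1) y'(2) Suc.hyps(2) by simp
  moreover have "D y' y" using filter_edge_D Suc.prems(1) y'(1) dy'(1) by simp
  ultimately show ?case by simp
qed

lemma dir_le_iff_basepoint_le: "x \<in> F \<Longrightarrow> y \<in> F \<Longrightarrow> dir_le D x y \<longleftrightarrow> basepoint_le V Adj v x y"
  unfolding dir_le_def basepoint_le_def using rtranclp_D_interval interval_rtranclp_D by blast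

lemma dir_le_antisym:
  assumes "x \<in> F" "y \<in> F" "dir_le D x y" "dir_le D y x"
  shows "x = y"
proof -
  have "x \<in> I v y" "y \<in> I v x" using assms rtranclp_D_interval unfolding dir_le_def by blast+
  moreover have V: "x \<in> V" "y \<in> V" using assms(1,2) mem_filter_iff by auto
  ultimately have "d x y = 0" using gdist_sym[OF V] unfolding mem_interval_iff by simp
  then show ?thesis using gdist_eq_0_iff V by blast
qed

definition event_halfspaces :: "'a set set" where
  "event_halfspaces = {halfspace b a |a b. D a b \<and> a \<in> F \<and> b \<in> F}"

definition halfspaces_containing :: "'a \<Rightarrow> 'a set set" where
  "halfspaces_containing x = {H \<in> event_halfspaces. x \<in> H}"

lemma event_halfspaceE:
  assumes "H \<in> event_halfspaces"
  obtains a b where "D a b" "a \<in> F" "b \<in> F" "H = halfspace b a"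
  using assms unfolding event_halfspaces_def by blast

lemma event_halfspaceI: "D a b \<Longrightarrow> a \<in> F \<Longrightarrow> b \<in> F \<Longrightarrow> halfspace b a \<in> event_halfspaces"
  unfolding event_halfspaces_def by blast

lemma root_notin_event_halfspace: "H \<in> event_halfspaces \<Longrightarrow> v \<notin> H"
  by (elim event_halfspaceE) (use filter_D_gdist mem_halfspace_iff in fastforce)

lemma empty_notin_event_halfspaces: "{} \<notin> event_halfspaces"
  by (metis D_adj adj_sym empty_iff event_halfspaceE halfspace_self)

lemma finite_halfspaces_containing: "x \<in> V \<Longrightarrow> finite (halfspaces_containing x)"
proof -
  assume "x \<in> V"
  have "halfspaces_containing x \<subseteq>
      {halfspace q p |p q. Adj p q \<and> v \<notin> halfspace q p \<and> x \<in> halfspace q p}"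
    unfolding halfspaces_containing_def
    by (auto elim!: event_halfspaceE dest: D_adj root_notin_event_halfspace[OF event_halfspaceI])
  then show ?thesis using finite_separating_halfspaces[OF root \<open>x \<in> V\<close>] finite_subset by blast
qed

lemma halfspaces_containing_mono:
  assumes "y \<in> V" "x \<in> I v y"
  shows "halfspaces_containing x \<subseteq> halfspaces_containing y"
proof
  fix H assume "H \<in> halfspaces_containing x"
  then have H: "H \<in> event_halfspaces" "x \<in> H" unfolding halfspaces_containing_def by auto
  then obtain a b where ab: "D a b" "H = halfspace b a" by (elim event_halfspaceE)
  have ba: "Adj b a" using D_adj adj_sym ab(1) by blast
  have "y \<in> H"
  proof (rule ccontr)
    assume "y \<notin> H"
    then have "y \<in> halfspace a b" "v \<in> halfspace a b"
      using halfspace_cases[OF ba] assms(1) root root_notin_event_halfspace H(1) ab(2) by blast+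
    then have "x \<in> halfspace a b" using halfspace_convex adj_sym[OF ba] assms(2) interval_sym by blast
    then show False using H(2) ab(2) halfspace_disjoint by blast
  qed
  then show "H \<in> halfspaces_containing y" using H(1) unfolding halfspaces_containing_def by blast
qed

text \<open>If x does not lie between v and y, the last edge x' x of a geodesic from the median of v, x, y
  to x yields a halfspace containing x and y, and then, by convexity, also the median.\<close>

lemma interval_if_halfspaces_containing_subset:
  assumes xy: "x \<in> F" "y \<in> F" and sub: "halfspaces_containing x \<subseteq> halfspaces_containing y"
  shows "x \<in> I v y"
proof (rule ccontr)
  assume notin: "x \<notin> I v y"
  have V: "x \<in> V" "y \<in> V" using xy mem_filter_iff by auto
  obtain m where m: "m \<in> I v x" "m \<in> I x y" "m \<in> I y v" using median_exists[OF root V] .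
  have mV: "m \<in> V" using m mem_interval_iff by blast
  have "m \<noteq> x" using m(3) notin interval_sym[OF V(2) root] by blast
  then obtain x' where x': "Adj x' x" "d m x' + 1 = d m x" using geodesic_last_step mV V by metis
  have x'V: "x' \<in> V" using x' adj_in_V by blast
  have "d v x' \<le> d v m + d m x'" "d v x \<le> d v x' + 1" "d v m + d m x = d v x"
    using gdist_triangle[OF root mV x'V] gdist_adj_le[OF x'(1) root] m(1) mem_interval_iff by auto
  then have dx': "d v x' + 1 = d v x" using x'(2) by linarith
  then have "x' \<in> I v x" using mem_interval_iff x'V gdist_adj[OF x'(1)] by simp
  then have "x' \<in> F" using filter_convex root_in_filter xy(1) by blast
  moreover have "D x' x" using filter_edge_D xy(1) x'(1) dx' by simp
  ultimately have "halfspace x x' \<in> halfspaces_containing x"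
    using event_halfspaceI xy(1) halfspace_self adj_sym[OF x'(1)]
    unfolding halfspaces_containing_def by blast
  then have "y \<in> halfspace x x'" using sub unfolding halfspaces_containing_def by blast
  then have "m \<in> halfspace x x'"
    using halfspace_convex adj_sym[OF x'(1)] halfspace_self m(2) by blast
  moreover have "m \<in> halfspace x' x" using x'(2) mV mem_halfspace_iff by simp
  ultimately show False using halfspace_disjoint by blast
qed

lemma halfspaces_containing_subset_iff:
  assumes "x \<in> F" "y \<in> F"
  shows "halfspaces_containing x \<subseteq> halfspaces_containing y \<longleftrightarrow> dir_le D x y"
proof -
  have "halfspaces_containing x \<subseteq> halfspaces_containing y \<longleftrightarrow> x \<in> I v y"
    using halfspaces_containing_mono interval_if_halfspaces_containing_subset assms mem_filter_iff
    by blast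
  then show ?thesis using dir_le_iff_basepoint_le[OF assms] unfolding basepoint_le_def by simp
qed

text \<open>Otherwise the first edge y y1 of a geodesic from y to x yields a halfspace containing H
  that is either a proper superset of H or in conflict with it.\<close>

lemma nearest_point_adjacent:
  assumes y: "y \<in> F" and H: "H \<in> event_halfspaces" "y \<notin> H"
    and x: "x \<in> H" and nearest: "\<And>z. z \<in> H \<Longrightarrow> d y x \<le> d y z"
    and supersets: "\<And>H'. H' \<in> event_halfspaces \<Longrightarrow> H \<subset> H' \<Longrightarrow> y \<in> H'"
    and meets: "\<And>H'. H' \<in> event_halfspaces \<Longrightarrow> y \<in> H' \<Longrightarrow> H' \<inter> H \<noteq> {}"
  shows "Adj y x"
proof (rule ccontr)
  assume not_adj: "\<not> Adj y x"
  obtain a b where ab: "D a b" "b \<in> F" "H = halfspace b a" using H(1) by (elim event_halfspaceE)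
  have ba: "Adj b a" using ab(1) D_adj adj_sym by blast
  have HV: "H \<subseteq> V" using ab(3) mem_halfspace_iff by blast
  have V: "y \<in> V" "x \<in> V" using y mem_filter_iff x HV by auto
  have "x \<noteq> y" using x H(2) by blast
  then have "d y x \<noteq> 0" "d y x \<noteq> 1" using gdist_eq_0_iff gdist_eq_1_iff_adj V not_adj by auto
  obtain y1 where y1: "Adj y y1" "d y1 x + 1 = d y x" using geodesic_first_step V \<open>x \<noteq> y\<close> by blast
  have "y1 \<notin> H" using nearest gdist_adj[OF y1(1)] \<open>d y x \<noteq> 0\<close> \<open>d y x \<noteq> 1\<close> by fastforce
  have "\<And>x z. x \<in> H \<Longrightarrow> z \<in> H \<Longrightarrow> I x z \<subseteq> H" using halfspace_convex[OF ba] ab(3) by blast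
  then have "\<And>z. z \<in> H \<Longrightarrow> x \<in> I y z" using nearest_point_in_interval[OF _ HV V(1) x _ nearest] by blast
  then have H_sub: "H \<subseteq> halfspace y1 y" using interval_subset_halfspace y1 HV by blast
  have y1V: "y1 \<in> V" using y1 adj_in_V by blast
  consider "d v y < d v y1" | "d v y1 < d v y" using gdist_adj_cases[OF y1(1) root] by linarith
  then show False
  proof cases
    case 1
    have "b \<in> halfspace y1 y" using H_sub halfspace_self[OF ba] ab(3) by blast
    moreover have "v \<in> halfspace y y1" using 1 root mem_halfspace_iff by blast
    ultimately have "D y y1" using filter_oriented_away ab(2) oriented_away_D y1(1) by blast
    then have "y1 \<in> F" using y y1V mem_filter_iff rtranclp.rtrancl_into_rtrancl by metis
    then have "halfspace y1 y \<in> event_halfspaces" using event_halfspaceI \<open>D y y1\<close> y by blast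
    moreover have "H \<subset> halfspace y1 y" using H_sub \<open>y1 \<notin> H\<close> halfspace_self[OF adj_sym[OF y1(1)]] by blast
    ultimately have "y \<in> halfspace y1 y" using supersets by blast
    then show False using mem_halfspace_iff by simp
  next
    case 2
    then have "D y1 y" using filter_edge_D y adj_sym[OF y1(1)] by blast
    moreover have "y1 \<in> I v y" using 2 y1V gdist_adj[OF adj_sym[OF y1(1)]] gdist_adj_cases[OF y1(1) root]
      unfolding mem_interval_iff by auto
    then have "y1 \<in> F" using filter_convex root_in_filter y by blast
    ultimately have "halfspace y y1 \<in> event_halfspaces" using event_halfspaceI y by blast
    then have "halfspace y y1 \<inter> H \<noteq> {}" using meets halfspace_self[OF y1(1)] by blast
    then show False using H_sub halfspace_disjoint by blast
  qed
qed

lemma halfspaces_containing_insert: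
  assumes y: "y \<in> F" and H: "H \<in> event_halfspaces" "y \<notin> H"
    and supersets: "\<And>H'. H' \<in> event_halfspaces \<Longrightarrow> H \<subset> H' \<Longrightarrow> y \<in> H'"
    and meets: "\<And>H'. H' \<in> event_halfspaces \<Longrightarrow> y \<in> H' \<Longrightarrow> H' \<inter> H \<noteq> {}"
  obtains x where "x \<in> F" "halfspaces_containing x = insert H (halfspaces_containing y)"
proof -
  obtain a b where ab: "D a b" "H = halfspace b a" using H(1) by (elim event_halfspaceE)
  have eab: "Adj a b" using ab(1) D_adj by blast
  obtain x where x: "x \<in> H" "\<And>z. z \<in> H \<Longrightarrow> d y x \<le> d y z"
    using ex_has_least_nat[of "\<lambda>z. z \<in> H" b "d y"] halfspace_self[OF adj_sym[OF eab]] ab(2) by blast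
  have yx: "Adj y x" using nearest_point_adjacent[OF y H x] supersets meets by blast
  have "y \<in> halfspace a b" using halfspace_cases[OF eab] y mem_filter_iff H(2) ab(2) by blast
  then have "D y x" and H_eq: "H = halfspace x y"
    using D_iff_if_separated[OF eab yx] halfspace_eq_if_separated[OF adj_sym[OF eab] adj_sym[OF yx]]
      ab x(1) by auto
  then have "x \<in> F" using y mem_filter_iff adj_in_V[OF yx] rtranclp.rtrancl_into_rtrancl by metis
  have "x \<in> H' \<longleftrightarrow> H' = H \<or> y \<in> H'" if H': "H' \<in> event_halfspaces" for H'
  proof -
    obtain a' b' where ab': "D a' b'" "H' = halfspace b' a'" using H' by (elim event_halfspaceE)
    have e': "Adj a' b'" using ab'(1) D_adj by blast
    have xV: "x \<in> V" "y \<in> V" using yx adj_in_V by auto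
    show ?thesis
    proof (cases "y \<in> H'")
      case True
      have "x \<in> H'"
      proof (rule ccontr)
        assume "x \<notin> H'"
        then have "x \<in> halfspace a' b'" using halfspace_cases[OF e'] xV(1) ab'(2) by blast
        then have "D x y" using D_iff_if_separated[OF e' adj_sym[OF yx]] True ab' by blast
        then show False using D_asym \<open>D y x\<close> by blast
      qed
      then show ?thesis using True by blast
    next
      case False
      then have "y \<in> halfspace a' b'" using halfspace_cases[OF e'] xV(2) ab'(2) by blast
      then have "x \<in> H' \<longleftrightarrow> H' = halfspace x y"
        using halfspace_eq_if_separated[OF adj_sym[OF e'] adj_sym[OF yx]] ab'(2) halfspace_disjoint
          halfspace_self[OF adj_sym[OF yx]] by blast
      then show ?thesis using False H_eq by blast
    qed
  qed
  then have "halfspaces_containing x = insert H (halfspaces_containing y)"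
    unfolding halfspaces_containing_def using H(1) by blast
  with \<open>x \<in> F\<close> show thesis by (rule that)
qed

lemma halfspaces_containing_configuration:
  "x \<in> F \<Longrightarrow> halfspaces_containing x \<in> configurations event_halfspaces (\<supseteq>) disjnt"
  unfolding configurations_def halfspaces_containing_def disjnt_def
  using finite_halfspaces_containing[of x] mem_filter_iff unfolding halfspaces_containing_def by blast

lemma configuration_halfspaces_containing:
  "C \<in> configurations event_halfspaces (\<supseteq>) disjnt \<Longrightarrow> \<exists>x\<in>F. C = halfspaces_containing x"
proof (induction "card C" arbitrary: C)
  case 0
  then have "C = {}" unfolding configurations_def by simp
  then show ?case using root_in_filter root_notin_event_halfspace
    unfolding halfspaces_containing_def by blast
next
  case (Suc n)
  then have C: "finite C" "C \<noteq> {}" "C \<subseteq> event_halfspaces"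
    "\<And>H H'. H \<in> C \<Longrightarrow> H' \<in> event_halfspaces \<Longrightarrow> H \<subseteq> H' \<Longrightarrow> H' \<in> C"
    "\<And>H H'. H \<in> C \<Longrightarrow> H' \<in> C \<Longrightarrow> \<not> disjnt H H'"
    unfolding configurations_def by auto
  obtain H where H: "H \<in> C" "\<And>H'. H' \<in> C \<Longrightarrow> H' \<subseteq> H \<Longrightarrow> H' = H"
    using finite_has_minimal[OF C(1,2)] by auto
  have "C - {H} \<in> configurations event_halfspaces (\<supseteq>) disjnt"
    using configurations_remove_minimal Suc.prems H by blast
  moreover have "n = card (C - {H})" using Suc.hyps(2) H(1) C(1) by simp
  ultimately obtain y where y: "y \<in> F" "C - {H} = halfspaces_containing y" using Suc.hyps(1) by blast
  have H_event: "H \<in> event_halfspaces" using H(1) C(3) by blast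
  have y_notin: "y \<notin> H" using y(2) H(1) C(3) unfolding halfspaces_containing_def by blast
  have supersets: "y \<in> H'" if "H' \<in> event_halfspaces" "H \<subset> H'" for H'
    using that C(4)[OF H(1)] y(2) unfolding halfspaces_containing_def by blast
  have meets: "H' \<inter> H \<noteq> {}" if "H' \<in> event_halfspaces" "y \<in> H'" for H'
    using that C(5)[OF _ H(1)] y(2) unfolding halfspaces_containing_def disjnt_def by blast
  obtain x where "x \<in> F" "halfspaces_containing x = insert H (halfspaces_containing y)"
    using halfspaces_containing_insert[OF y(1) H_event y_notin supersets meets] .
  then show ?case using y(2) H(1) by (metis insert_Diff)
qed

lemma filter_domain_of_event_structure:
  "\<exists>(E :: ('a \<times> 'a) set set) le cf f. event_structure E le cf
     \<and> bij_betw f F (configurations E le cf)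
     \<and> (\<forall>x\<in>F. \<forall>y\<in>F. dir_le D x y \<longleftrightarrow> f x \<subseteq> f y)"
proof (intro exI conjI)
  show "event_structure (Id_on ` event_halfspaces) (\<supseteq>) disjnt"
  proof (rule event_structure_supersets)
    show "{} \<notin> Id_on ` event_halfspaces"
      using empty_notin_event_halfspaces Id_on_subset_iff by (metis Id_on_empty image_iff subset_empty)
  next
    fix e assume "e \<in> Id_on ` event_halfspaces"
    then obtain H where H: "H \<in> event_halfspaces" "e = Id_on H" by blast
    then obtain b where "b \<in> H" using empty_notin_event_halfspaces by (metis ex_in_conv)
    then have sub: "{e' \<in> Id_on ` event_halfspaces. e \<subseteq> e'} \<subseteq> Id_on ` halfspaces_containing b"
      unfolding halfspaces_containing_def H(2) using Id_on_subset_iff by blast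
    have "b \<in> V" using \<open>b \<in> H\<close> H(1) by (auto elim: event_halfspaceE simp: mem_halfspace_iff)
    then have "finite (Id_on ` halfspaces_containing b)"
      using finite_halfspaces_containing by (intro finite_imageI)
    then show "finite {e' \<in> Id_on ` event_halfspaces. e \<subseteq> e'}" using sub by (rule finite_subset[rotated])
  qed
  have bij: "bij_betw halfspaces_containing F (configurations event_halfspaces (\<supseteq>) disjnt)"
    unfolding bij_betw_def
  proof
    show "inj_on halfspaces_containing F"
      by (rule inj_onI) (metis halfspaces_containing_subset_iff dir_le_antisym order_refl)
    show "halfspaces_containing ` F = configurations event_halfspaces (\<supseteq>) disjnt"
      using halfspaces_containing_configuration configuration_halfspaces_containing by blast
  qed
  have "inj_on (image Id_on) (configurations event_halfspaces (\<supseteq>) disjnt)"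
    using inj_on_image inj_on_subset[OF inj_Id_on] by blast
  then show "bij_betw (image Id_on \<circ> halfspaces_containing) F
      (configurations (Id_on ` event_halfspaces) (\<supseteq>) disjnt)"
    unfolding configurations_image_Id_on by (rule bij_betw_trans[OF bij inj_on_imp_bij_betw])
  show "\<forall>x\<in>F. \<forall>y\<in>F. dir_le D x y \<longleftrightarrow>
      (image Id_on \<circ> halfspaces_containing) x \<subseteq> (image Id_on \<circ> halfspaces_containing) y"
    by (simp add: inj_image_subset_iff[OF inj_Id_on] halfspaces_containing_subset_iff)
qed

lemma filter_convex_set: "convex_set V Adj F"
  unfolding convex_set_def using filter_convex mem_filter_iff by blast

lemma principal_filter_subset: "u \<in> F \<Longrightarrow> principal_filter V D u \<subseteq> F"
  unfolding principal_filter_def dir_le_def by auto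

lemma principal_filter_eq_basepoint_filter:
  "u \<in> F \<Longrightarrow> principal_filter V D u = {x \<in> F. basepoint_le V Adj v u x}"
  using principal_filter_subset dir_le_iff_basepoint_le unfolding principal_filter_def by blast

end

theorem lemma4p1:
  fixes V :: "'a set" and Adj D :: "'a \<Rightarrow> 'a \<Rightarrow> bool" and v :: 'a
  assumes "directed_median_graph V Adj D" and "v \<in> V"
  shows "convex_set V Adj (principal_filter V D v)
    \<and> (\<forall>x\<in>principal_filter V D v. \<forall>y\<in>principal_filter V D v.
          dir_le D x y \<longleftrightarrow> basepoint_le V Adj v x y)
    \<and> (\<exists>(E :: ('a \<times> 'a) set set) le cf f. event_structure E le cf
          \<and> bij_betw f (principal_filter V D v) (configurations E le cf)
          \<and> (\<forall>x\<in>principal_filter V D v. \<forall>y\<in>principal_filter V D v.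
               dir_le D x y \<longleftrightarrow> f x \<subseteq> f y))
    \<and> (\<forall>u\<in>principal_filter V D v.
          principal_filter V D u \<subseteq> principal_filter V D v
          \<and> principal_filter V D u = {x \<in> principal_filter V D v. basepoint_le V Adj v u x})"
proof -
  interpret rooted_directed_median V Adj D v
    using assms by unfold_locales
  show ?thesis
    using filter_convex_set dir_le_iff_basepoint_le filter_domain_of_event_structure
      principal_filter_subset principal_filter_eq_basepoint_filter
    by blast
qed

end
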